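(* Let $\Gamma$ be a discrete group with identity $e$ and let $S\subseteq\Gamma$ with $e\in S$, $\chi_S\in M_{cb}\mathrm{A}(\Gamma)$ and $\|\chi_S\|_{cb}<\frac{1+\sqrt{2}}{2}$. Then for all $u,v\in S$, at least one of $uv$ and $vu$ belongs to $S$.
   Context: $\mathrm{A}(\Gamma)$ denotes the Fourier algebra of $\Gamma$, the predual of the group von Neumann algebra $\mathrm{VN}(\Gamma)$, equipped with its canonical (predual) operator space structure. $M_{cb}\mathrm{A}(\Gamma)$ is the algebra of completely bounded multipliers of $\mathrm{A}(\Gamma)$: functions $\varphi:\Gamma\to\mathbb{C}$ such that $f\mapsto\varphi f$ is a completely bounded map $\mathrm{A}(\Gamma)\to\mathrm{A}(\Gamma)$; $\|\varphi\|_{cb}$ denotes the completely bounded norm of this map. *)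

theory Defs
  imports "HOL-Analysis.Analysis" "HOL-Algebra.Group"
begin

text \<open>Concrete model of the operator-space structure of the Fourier algebra of a
discrete group G, via its dual: the reduced group C*-algebra / VN(G) acting on l2(G).
An element of M_n(C[G]) is a finitely supported function a : G -> M_n(C),
representing the operator sum_g a(g) (x) lambda(g) on l2(G; C^n),
where (lambda(g) xi)(x) = xi(g^-1 x).  Vectors in l2(G;C^n) are functions
G -> nat -> complex (coordinates i < n); we use the dense subspace of finitely
supported vectors.\<close>

definition mat_supp :: "('a, 'b) monoid_scheme \<Rightarrow> nat \<Rightarrow> ('a \<Rightarrow> nat \<Rightarrow> nat \<Rightarrow> complex) \<Rightarrow> 'a set" where
  "mat_supp G n a = {g \<in> carrier G. \<exists>i<n. \<exists>j<n. a g i j \<noteq> 0}"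

definition fin_mat :: "('a, 'b) monoid_scheme \<Rightarrow> nat \<Rightarrow> ('a \<Rightarrow> nat \<Rightarrow> nat \<Rightarrow> complex) \<Rightarrow> bool" where
  "fin_mat G n a \<longleftrightarrow> finite (mat_supp G n a)"

definition vec_supp :: "('a, 'b) monoid_scheme \<Rightarrow> nat \<Rightarrow> ('a \<Rightarrow> nat \<Rightarrow> complex) \<Rightarrow> 'a set" where
  "vec_supp G n \<xi> = {x \<in> carrier G. \<exists>i<n. \<xi> x i \<noteq> 0}"

definition fin_vec :: "('a, 'b) monoid_scheme \<Rightarrow> nat \<Rightarrow> ('a \<Rightarrow> nat \<Rightarrow> complex) \<Rightarrow> bool" where
  "fin_vec G n \<xi> \<longleftrightarrow> finite (vec_supp G n \<xi>)"

definition vnorm :: "('a, 'b) monoid_scheme \<Rightarrow> nat \<Rightarrow> ('a \<Rightarrow> nat \<Rightarrow> complex) \<Rightarrow> real" where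
  "vnorm G n \<xi> = sqrt (\<Sum>x\<in>vec_supp G n \<xi>. \<Sum>i<n. (cmod (\<xi> x i))\<^sup>2)"

definition op_apply :: "('a, 'b) monoid_scheme \<Rightarrow> nat \<Rightarrow> ('a \<Rightarrow> nat \<Rightarrow> nat \<Rightarrow> complex)
    \<Rightarrow> ('a \<Rightarrow> nat \<Rightarrow> complex) \<Rightarrow> ('a \<Rightarrow> nat \<Rightarrow> complex)" where
  "op_apply G n a \<xi> = (\<lambda>x i. if x \<in> carrier G \<and> i < n
      then (\<Sum>g\<in>mat_supp G n a. \<Sum>j<n. a g i j * \<xi> (inv\<^bsub>G\<^esub> g \<otimes>\<^bsub>G\<^esub> x) j) else 0)"

text \<open>Operator norm (in B(l2(G;C^n))) of sum_g a(g) (x) lambda(g), i.e. the norm of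
a in M_n(C*_r(G)) = M_n(VN(G)).\<close>
definition op_norm :: "('a, 'b) monoid_scheme \<Rightarrow> nat \<Rightarrow> ('a \<Rightarrow> nat \<Rightarrow> nat \<Rightarrow> complex) \<Rightarrow> real" where
  "op_norm G n a = Sup {vnorm G n (op_apply G n a \<xi>) | \<xi>. fin_vec G n \<xi> \<and> vnorm G n \<xi> \<le> 1}"

text \<open>phi is a cb multiplier with cb-norm at most C: the (adjoint) multiplication map
lambda(g) |-> phi(g) lambda(g) satisfies ||id_{M_n} (x) M_phi|| \<le> C for all n.\<close>
definition cb_mult_bound :: "('a, 'b) monoid_scheme \<Rightarrow> ('a \<Rightarrow> complex) \<Rightarrow> real \<Rightarrow> bool" where
  "cb_mult_bound G \<phi> C \<longleftrightarrow> (\<forall>n a. fin_mat G n a \<longrightarrow>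
      op_norm G n (\<lambda>g i j. \<phi> g * a g i j) \<le> C * op_norm G n a)"

definition McbA :: "('a, 'b) monoid_scheme \<Rightarrow> ('a \<Rightarrow> complex) set" where
  "McbA G = {\<phi>. \<exists>C. cb_mult_bound G \<phi> C}"

definition cb_norm :: "('a, 'b) monoid_scheme \<Rightarrow> ('a \<Rightarrow> complex) \<Rightarrow> real" where
  "cb_norm G \<phi> = Inf {C. C \<ge> 0 \<and> cb_mult_bound G \<phi> C}"

definition char_fun :: "'a set \<Rightarrow> 'a \<Rightarrow> complex" where
  "char_fun S = (\<lambda>x. if x \<in> S then 1 else 0)"

end

theory Submission
  imports Defs
begin

(*
  A cb multiplier phi with bound C dominates every Schur multiplier of the form
  [phi(x_i y_j^-1)] on M_n: multiplying the element sum_ij M_ij e_ij (x) lambda(x_i y_j^-1),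
  whose operator norm is that of M, by phi gives the corresponding element for the Schur
  product of M with [phi(x_i y_j^-1)].  It therefore suffices to exhibit 0-1 patterns
  [chi_S(x_i y_j^-1)] whose Schur multiplier norm is at least (1 + sqrt 2)/2; such a lower
  bound is certified by an orthogonal matrix M and a vector e.

  If uv and vu are not in S, then x = (1, u, v) and y = (1, v^-1, u^-1) give the pattern
  [[1,1,1], [1,chi(uv),chi(u^2)], [1,chi(v^2),chi(vu)]], which is too large as soon as u^2 and
  v^2 lie in S.  That S contains the squares of its elements follows in the same way from the
  Toeplitz patterns [chi_S(w^(i-j))], i, j < 4, by a case distinction on the values of chi_S at
  w^-1, w^-2, w^-3 and w^3.
*)

section \<open>Operators on l2(G; C^n)\<close>

definition bounded_op :: "('a, 'b) monoid_scheme \<Rightarrow> nat \<Rightarrow> ('a \<Rightarrow> nat \<Rightarrow> nat \<Rightarrow> complex) \<Rightarrow> bool" where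
  "bounded_op G n a \<longleftrightarrow>
     bdd_above {vnorm G n (op_apply G n a \<xi>) | \<xi>. fin_vec G n \<xi> \<and> vnorm G n \<xi> \<le> 1}"

lemma vnorm_nonneg: "0 \<le> vnorm G n \<xi>"
  unfolding vnorm_def by (simp add: sum_nonneg)

lemma vnorm_eq_sum_superset:
  assumes "finite A" "vec_supp G n \<xi> \<subseteq> A" "A \<subseteq> carrier G"
  shows "vnorm G n \<xi> = sqrt (\<Sum>x\<in>A. \<Sum>i<n. (cmod (\<xi> x i))\<^sup>2)"
proof -
  have "\<forall>x\<in>A - vec_supp G n \<xi>. \<forall>i<n. \<xi> x i = 0"
    using assms(3) by (auto simp: vec_supp_def)
  then have "\<forall>x\<in>A - vec_supp G n \<xi>. (\<Sum>i<n. (cmod (\<xi> x i))\<^sup>2) = 0"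
    by simp
  then have "(\<Sum>x\<in>vec_supp G n \<xi>. \<Sum>i<n. (cmod (\<xi> x i))\<^sup>2)
      = (\<Sum>x\<in>A. \<Sum>i<n. (cmod (\<xi> x i))\<^sup>2)"
    by (rule sum.mono_neutral_left[OF assms(1,2)])
  then show ?thesis
    by (simp add: vnorm_def)
qed

lemma bounded_opI:
  assumes "0 \<le> B" and "\<And>\<xi>. fin_vec G n \<xi> \<Longrightarrow> vnorm G n (op_apply G n a \<xi>) \<le> B * vnorm G n \<xi>"
  shows "bounded_op G n a"
  unfolding bounded_op_def
proof (rule bdd_aboveI)
  show "y \<le> B" if "y \<in> {vnorm G n (op_apply G n a \<xi>) | \<xi>. fin_vec G n \<xi> \<and> vnorm G n \<xi> \<le> 1}" for y
    using that assms mult_left_le[of _ B] by fastforce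
qed

lemma op_norm_leI:
  assumes "0 \<le> B" and "\<And>\<xi>. fin_vec G n \<xi> \<Longrightarrow> vnorm G n (op_apply G n a \<xi>) \<le> B * vnorm G n \<xi>"
  shows "op_norm G n a \<le> B"
  unfolding op_norm_def
proof (rule cSup_least)
  have "fin_vec G n (\<lambda>_ _. 0) \<and> vnorm G n (\<lambda>_ _. 0) \<le> 1"
    by (simp add: fin_vec_def vec_supp_def vnorm_def)
  then show "{vnorm G n (op_apply G n a \<xi>) | \<xi>. fin_vec G n \<xi> \<and> vnorm G n \<xi> \<le> 1} \<noteq> {}"
    by blast
  show "y \<le> B" if "y \<in> {vnorm G n (op_apply G n a \<xi>) | \<xi>. fin_vec G n \<xi> \<and> vnorm G n \<xi> \<le> 1}" for y
    using that assms mult_left_le[of _ B] by fastforce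
qed

lemma vnorm_op_apply_le_op_norm_unit:
  assumes "bounded_op G n a" "fin_vec G n \<xi>" "vnorm G n \<xi> \<le> 1"
  shows "vnorm G n (op_apply G n a \<xi>) \<le> op_norm G n a"
  using assms unfolding bounded_op_def op_norm_def by (blast intro: cSup_upper)

lemma op_norm_nonneg:
  assumes "bounded_op G n a"
  shows "0 \<le> op_norm G n a"
proof -
  have "fin_vec G n (\<lambda>_ _. 0)" "vnorm G n (\<lambda>_ _. 0) \<le> 1"
    by (simp_all add: fin_vec_def vec_supp_def vnorm_def)
  then show ?thesis
    using vnorm_op_apply_le_op_norm_unit[OF assms] vnorm_nonneg order_trans by blast
qed

lemma op_apply_scale:
  "op_apply G n a (\<lambda>x i. c * \<xi> x i) = (\<lambda>x i. c * op_apply G n a \<xi> x i)"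
  by (simp add: op_apply_def fun_eq_iff sum_distrib_left mult_ac)

lemma vnorm_scale: "vnorm G n (\<lambda>x i. c * \<xi> x i) = cmod c * vnorm G n \<xi>"
proof (cases "c = 0")
  case True
  then show ?thesis by (simp add: vnorm_def vec_supp_def)
next
  case False
  then have "vec_supp G n (\<lambda>x i. c * \<xi> x i) = vec_supp G n \<xi>"
    by (simp add: vec_supp_def)
  then show ?thesis
    by (simp add: vnorm_def norm_mult power_mult_distrib sum_distrib_left[symmetric] real_sqrt_mult)
qed

lemma fin_vec_scale: "fin_vec G n \<xi> \<Longrightarrow> fin_vec G n (\<lambda>x i. c * \<xi> x i)"
  unfolding fin_vec_def by (rule finite_subset[rotated]) (auto simp: vec_supp_def)

context group
begin

lemma vnorm_op_apply_le_op_norm: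
  assumes a: "bounded_op G n a" and \<xi>: "fin_vec G n \<xi>"
  shows "vnorm G n (op_apply G n a \<xi>) \<le> op_norm G n a * vnorm G n \<xi>"
proof (cases "vnorm G n \<xi> = 0")
  case True
  have "vec_supp G n \<xi> = {}"
  proof (rule ccontr)
    assume "vec_supp G n \<xi> \<noteq> {}"
    then obtain x i where "x \<in> vec_supp G n \<xi>" "i < n" "\<xi> x i \<noteq> 0"
      by (auto simp: vec_supp_def)
    then have "0 < (\<Sum>x\<in>vec_supp G n \<xi>. \<Sum>i<n. (cmod (\<xi> x i))\<^sup>2)"
      using \<xi> by (intro sum_pos2[of _ x] sum_pos2[of _ i]) (auto simp: fin_vec_def sum_nonneg)
    with True show False by (simp add: vnorm_def)
  qed
  then have "op_apply G n a \<xi> = (\<lambda>_ _. 0)"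
    by (auto simp: op_apply_def fun_eq_iff vec_supp_def mat_supp_def)
  then show ?thesis
    using True by (simp add: vnorm_def vec_supp_def)
next
  case False
  define t where "t = vnorm G n \<xi>"
  have t: "0 < t"
    using False vnorm_nonneg[of G n \<xi>] by (simp add: t_def)
  let ?\<xi>' = "\<lambda>x i. complex_of_real (1 / t) * \<xi> x i"
  have "vnorm G n ?\<xi>' = 1"
    using t by (simp only: vnorm_scale) (simp add: t_def[symmetric] norm_divide)
  then have "vnorm G n (op_apply G n a ?\<xi>') \<le> op_norm G n a"
    by (intro vnorm_op_apply_le_op_norm_unit[OF a fin_vec_scale[OF \<xi>]]) simp
  then have "vnorm G n (op_apply G n a \<xi>) / t \<le> op_norm G n a"
    using t by (simp only: op_apply_scale vnorm_scale) (simp add: norm_divide)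
  then show ?thesis
    using t by (simp add: t_def[symmetric] divide_le_eq)
qed

lemma sum_left_translate:
  assumes A: "finite A" and Z: "finite Z" "Z \<subseteq> carrier G" and g: "g \<in> carrier G"
    and supp: "\<And>x. x \<in> A \<Longrightarrow> f x \<noteq> 0 \<Longrightarrow> x \<in> (\<lambda>z. g \<otimes> z) ` Z"
    and supp': "\<And>z. z \<in> Z \<Longrightarrow> f (g \<otimes> z) \<noteq> 0 \<Longrightarrow> g \<otimes> z \<in> A"
  shows "(\<Sum>x\<in>A. f x) = (\<Sum>z\<in>Z. f (g \<otimes> z))"
proof -
  let ?gZ = "(\<lambda>z. g \<otimes> z) ` Z"
  have "(\<Sum>x\<in>A. f x) = (\<Sum>x\<in>A \<union> ?gZ. f x)"
    by (rule sum.mono_neutral_left) (use A Z supp' in auto)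
  also have "\<dots> = (\<Sum>x\<in>?gZ. f x)"
    by (rule sum.mono_neutral_right) (use A Z supp in auto)
  also have "\<dots> = (\<Sum>z\<in>Z. f (g \<otimes> z))"
    by (rule sum.reindex[unfolded comp_def]) (meson Z(2) g inj_on_cmult inj_on_subset)
  finally show ?thesis .
qed

lemma sum_vec_supp_left_translate:
  assumes \<xi>: "fin_vec G n \<xi>" and g: "g \<in> carrier G" and Z: "finite Z" "Z \<subseteq> carrier G"
    and ZI: "\<And>w. w \<in> vec_supp G n \<xi> \<Longrightarrow> inv g \<otimes> w \<in> Z" and j: "j < n"
  shows "(\<Sum>z\<in>Z. (cmod (\<xi> (g \<otimes> z) j))\<^sup>2) = (\<Sum>w\<in>vec_supp G n \<xi>. (cmod (\<xi> w j))\<^sup>2)"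
proof (rule sum_left_translate[symmetric])
  fix w assume w: "w \<in> vec_supp G n \<xi>"
  then have "w = g \<otimes> (inv g \<otimes> w)"
    using g by (auto simp: vec_supp_def m_assoc[symmetric])
  with ZI[OF w] show "w \<in> (\<lambda>z. g \<otimes> z) ` Z"
    by blast
next
  show "g \<otimes> z \<in> vec_supp G n \<xi>" if "z \<in> Z" "(cmod (\<xi> (g \<otimes> z) j))\<^sup>2 \<noteq> 0" for z
    using that Z(2) g j by (auto simp: vec_supp_def)
qed (use \<xi> g Z in \<open>auto simp: fin_vec_def\<close>)

end

section \<open>Matrices of Schur type\<close>

(* The element sum_ij M i j e_ij (x) lambda(xs i ys j^-1) of M_n(C[G]). *)
definition schur_matrix :: "('a, 'b) monoid_scheme \<Rightarrow> nat \<Rightarrow> (nat \<Rightarrow> 'a) \<Rightarrow> (nat \<Rightarrow> 'a)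
    \<Rightarrow> (nat \<Rightarrow> nat \<Rightarrow> complex) \<Rightarrow> 'a \<Rightarrow> nat \<Rightarrow> nat \<Rightarrow> complex" where
  "schur_matrix G n xs ys M =
     (\<lambda>g i j. if i < n \<and> j < n \<and> g = xs i \<otimes>\<^bsub>G\<^esub> inv\<^bsub>G\<^esub> (ys j) then M i j else 0)"

definition point_vec :: "nat \<Rightarrow> (nat \<Rightarrow> 'a) \<Rightarrow> (nat \<Rightarrow> complex) \<Rightarrow> 'a \<Rightarrow> nat \<Rightarrow> complex" where
  "point_vec n ys \<eta> = (\<lambda>x j. if j < n \<and> x = ys j then \<eta> j else 0)"

lemma fin_mat_schur_matrix: "fin_mat G n (schur_matrix G n xs ys M)"
proof -
  have "mat_supp G n (schur_matrix G n xs ys M)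
      \<subseteq> (\<lambda>(i, j). xs i \<otimes>\<^bsub>G\<^esub> inv\<^bsub>G\<^esub> (ys j)) ` ({..<n} \<times> {..<n})"
    unfolding mat_supp_def schur_matrix_def by (auto split: if_splits)
  then show ?thesis
    unfolding fin_mat_def by (rule finite_subset) simp
qed

lemma mult_schur_matrix:
  "(\<lambda>g i j. \<phi> g * schur_matrix G n xs ys M g i j)
     = schur_matrix G n xs ys (\<lambda>i j. \<phi> (xs i \<otimes>\<^bsub>G\<^esub> inv\<^bsub>G\<^esub> (ys j)) * M i j)"
  by (auto simp: schur_matrix_def fun_eq_iff)

lemma fin_vec_point_vec: "fin_vec G n (point_vec n ys \<eta>)"
proof -
  have "vec_supp G n (point_vec n ys \<eta>) \<subseteq> ys ` {..<n}"
    by (auto simp: vec_supp_def point_vec_def split: if_splits)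
  then show ?thesis
    unfolding fin_vec_def by (rule finite_subset) simp
qed

lemma mat_vec_norm_le_Frobenius:
  "(\<Sum>i<n. (cmod (\<Sum>j<n. M i j * \<eta> j))\<^sup>2)
     \<le> (sqrt (\<Sum>i<n. \<Sum>j<n. (cmod (M i j))\<^sup>2))\<^sup>2 * (\<Sum>j<n. (cmod (\<eta> j))\<^sup>2)"
proof -
  have row: "(cmod (\<Sum>j<n. M i j * \<eta> j))\<^sup>2
      \<le> (\<Sum>j<n. (cmod (M i j))\<^sup>2) * (\<Sum>j<n. (cmod (\<eta> j))\<^sup>2)" for i
  proof -
    have "cmod (\<Sum>j<n. M i j * \<eta> j) \<le> (\<Sum>j<n. cmod (M i j) * cmod (\<eta> j))"
      by (rule order_trans[OF norm_sum]) (simp add: norm_mult)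
    then have "(cmod (\<Sum>j<n. M i j * \<eta> j))\<^sup>2 \<le> (\<Sum>j<n. cmod (M i j) * cmod (\<eta> j))\<^sup>2"
      by (rule power_mono) simp
    also have "\<dots> \<le> (\<Sum>j<n. (cmod (M i j))\<^sup>2) * (\<Sum>j<n. (cmod (\<eta> j))\<^sup>2)"
      by (rule Cauchy_Schwarz_ineq_sum)
    finally show ?thesis .
  qed
  have "(\<Sum>i<n. (cmod (\<Sum>j<n. M i j * \<eta> j))\<^sup>2)
      \<le> (\<Sum>i<n. \<Sum>j<n. (cmod (M i j))\<^sup>2) * (\<Sum>j<n. (cmod (\<eta> j))\<^sup>2)"
    using sum_mono[OF row] by (simp add: sum_distrib_right)
  then show ?thesis by (simp add: sum_nonneg)
qed

context group
begin

lemma op_apply_schur_matrix: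
  assumes xs: "\<forall>i<n. xs i \<in> carrier G" and ys: "\<forall>j<n. ys j \<in> carrier G"
    and x: "x \<in> carrier G" and i: "i < n"
  shows "op_apply G n (schur_matrix G n xs ys M) \<xi> x i
       = (\<Sum>j<n. M i j * \<xi> (ys j \<otimes> (inv (xs i) \<otimes> x)) j)"
proof -
  let ?a = "schur_matrix G n xs ys M"
  let ?A = "mat_supp G n ?a"
  have "op_apply G n ?a \<xi> x i = (\<Sum>j<n. \<Sum>g\<in>?A. ?a g i j * \<xi> (inv g \<otimes> x) j)"
    using x i by (simp add: op_apply_def sum.swap[of _ ?A])
  also have "\<dots> = (\<Sum>j<n. M i j * \<xi> (ys j \<otimes> (inv (xs i) \<otimes> x)) j)"
  proof (rule sum.cong[OF refl])
    fix j assume j: "j \<in> {..<n}"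
    let ?h = "xs i \<otimes> inv (ys j)"
    have "inv ?h \<otimes> x = ys j \<otimes> (inv (xs i) \<otimes> x)"
      using xs ys i j x by (simp add: inv_mult_group m_assoc)
    moreover have "?h \<in> ?A" if "M i j \<noteq> 0"
      using that xs ys i j unfolding mat_supp_def schur_matrix_def by auto
    moreover have "finite ?A"
      using fin_mat_schur_matrix by (simp add: fin_mat_def)
    ultimately show "(\<Sum>g\<in>?A. ?a g i j * \<xi> (inv g \<otimes> x) j) = M i j * \<xi> (ys j \<otimes> (inv (xs i) \<otimes> x)) j"
      using i j by (auto simp: schur_matrix_def if_distrib[of "\<lambda>c. c * _"] cong: if_cong)
  qed
  finally show ?thesis .
qed

lemma vnorm_op_apply_schur_matrix_sq:
  assumes xs: "\<forall>i<n. xs i \<in> carrier G" and ys: "\<forall>j<n. ys j \<in> carrier G"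
    and Z: "finite Z" "Z \<subseteq> carrier G"
    and ZI: "\<And>j w. j < n \<Longrightarrow> w \<in> vec_supp G n \<xi> \<Longrightarrow> inv (ys j) \<otimes> w \<in> Z"
  shows "(vnorm G n (op_apply G n (schur_matrix G n xs ys M) \<xi>))\<^sup>2
       = (\<Sum>i<n. \<Sum>z\<in>Z. (cmod (\<Sum>j<n. M i j * \<xi> (ys j \<otimes> z) j))\<^sup>2)"
proof -
  let ?o = "op_apply G n (schur_matrix G n xs ys M) \<xi>"
  define A where "A = (\<Union>i<n. (\<lambda>z. xs i \<otimes> z) ` Z)"
  have A: "finite A" "A \<subseteq> carrier G"
    using Z xs by (auto simp: A_def)
  have o_vanishes: "?o x i = 0"
    if x: "x \<in> carrier G" "x \<notin> (\<lambda>z. xs i \<otimes> z) ` Z" and i: "i < n" for x i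
  proof -
    let ?z = "inv (xs i) \<otimes> x"
    have "\<xi> (ys j \<otimes> ?z) j = 0" if j: "j < n" for j
    proof (rule ccontr)
      assume "\<xi> (ys j \<otimes> ?z) j \<noteq> 0"
      then have "ys j \<otimes> ?z \<in> vec_supp G n \<xi>"
        using x xs ys i j by (auto simp: vec_supp_def)
      then have "inv (ys j) \<otimes> (ys j \<otimes> ?z) \<in> Z"
        using ZI j by blast
      moreover have "inv (ys j) \<otimes> (ys j \<otimes> ?z) = ?z" and "x = xs i \<otimes> ?z"
        using x xs ys i j by (simp_all add: m_assoc[symmetric])
      ultimately show False
        using x(2) by auto
    qed
    then show ?thesis
      using x i by (simp add: op_apply_schur_matrix[OF xs ys])
  qed
  have "vec_supp G n ?o \<subseteq> A"
    using o_vanishes unfolding A_def vec_supp_def by blast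
  then have "(vnorm G n ?o)\<^sup>2 = (\<Sum>i<n. \<Sum>x\<in>A. (cmod (?o x i))\<^sup>2)"
    using vnorm_eq_sum_superset[OF A(1) _ A(2)] by (simp add: sum_nonneg sum.swap[of _ A])
  also have "\<dots> = (\<Sum>i<n. \<Sum>z\<in>Z. (cmod (?o (xs i \<otimes> z) i))\<^sup>2)"
  proof (rule sum.cong[OF refl], rule sum_left_translate)
    show "x \<in> (\<lambda>z. xs i \<otimes> z) ` Z" if "i \<in> {..<n}" "x \<in> A" "(cmod (?o x i))\<^sup>2 \<noteq> 0" for i x
      using that A(2) o_vanishes by auto
  qed (use A Z xs in \<open>auto simp: A_def\<close>)
  also have "\<dots> = (\<Sum>i<n. \<Sum>z\<in>Z. (cmod (\<Sum>j<n. M i j * \<xi> (ys j \<otimes> z) j))\<^sup>2)"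
    using Z(2) xs by (intro sum.cong refl)
      (auto simp: op_apply_schur_matrix[OF xs ys] m_assoc[symmetric] subset_iff)
  finally show ?thesis .
qed

lemma vnorm_op_apply_schur_matrix_le:
  assumes xs: "\<forall>i<n. xs i \<in> carrier G" and ys: "\<forall>j<n. ys j \<in> carrier G"
    and B: "0 \<le> B"
    and M: "\<And>\<eta>. (\<Sum>i<n. (cmod (\<Sum>j<n. M i j * \<eta> j))\<^sup>2) \<le> B\<^sup>2 * (\<Sum>j<n. (cmod (\<eta> j))\<^sup>2)"
    and \<xi>: "fin_vec G n \<xi>"
  shows "vnorm G n (op_apply G n (schur_matrix G n xs ys M) \<xi>) \<le> B * vnorm G n \<xi>"
proof -
  define V where "V = vec_supp G n \<xi>"
  define Z where "Z = (\<Union>j<n. (\<lambda>w. inv (ys j) \<otimes> w) ` V)"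
  have Z: "finite Z" "Z \<subseteq> carrier G"
    using \<xi> ys by (auto simp: Z_def V_def fin_vec_def vec_supp_def)
  have ZI: "inv (ys j) \<otimes> w \<in> Z" if "j < n" "w \<in> V" for j w
    using that unfolding Z_def by blast
  have "(vnorm G n (op_apply G n (schur_matrix G n xs ys M) \<xi>))\<^sup>2
      = (\<Sum>i<n. \<Sum>z\<in>Z. (cmod (\<Sum>j<n. M i j * \<xi> (ys j \<otimes> z) j))\<^sup>2)"
    using ZI by (intro vnorm_op_apply_schur_matrix_sq[OF xs ys Z]) (simp add: V_def)
  also have "\<dots> \<le> (\<Sum>z\<in>Z. B\<^sup>2 * (\<Sum>j<n. (cmod (\<xi> (ys j \<otimes> z) j))\<^sup>2))"
    by (subst sum.swap) (rule sum_mono, rule M)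
  also have "\<dots> = B\<^sup>2 * (\<Sum>j<n. \<Sum>z\<in>Z. (cmod (\<xi> (ys j \<otimes> z) j))\<^sup>2)"
    by (simp add: sum_distrib_left sum.swap[of _ Z])
  also have "\<dots> = B\<^sup>2 * (\<Sum>j<n. \<Sum>w\<in>V. (cmod (\<xi> w j))\<^sup>2)"
    unfolding V_def using ys ZI
    by (intro arg_cong[where f = "\<lambda>s. B\<^sup>2 * s"] sum.cong refl
        sum_vec_supp_left_translate[OF \<xi> _ Z]) (auto simp: V_def)
  also have "\<dots> = (B * vnorm G n \<xi>)\<^sup>2"
    by (simp add: V_def vnorm_def power_mult_distrib sum_nonneg sum.swap[of _ "vec_supp G n \<xi>"])
  finally show ?thesis
    using B vnorm_nonneg by (meson power2_le_imp_le mult_nonneg_nonneg)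
qed

lemma op_norm_schur_matrix_le:
  assumes xs: "\<forall>i<n. xs i \<in> carrier G" and ys: "\<forall>j<n. ys j \<in> carrier G"
    and B: "0 \<le> B"
    and M: "\<And>\<eta>. (\<Sum>i<n. (cmod (\<Sum>j<n. M i j * \<eta> j))\<^sup>2) \<le> B\<^sup>2 * (\<Sum>j<n. (cmod (\<eta> j))\<^sup>2)"
  shows "op_norm G n (schur_matrix G n xs ys M) \<le> B"
  using op_norm_leI[OF B vnorm_op_apply_schur_matrix_le[OF xs ys B M]] .

lemma bounded_op_schur_matrix:
  assumes xs: "\<forall>i<n. xs i \<in> carrier G" and ys: "\<forall>j<n. ys j \<in> carrier G"
  shows "bounded_op G n (schur_matrix G n xs ys M)"
  by (rule bounded_opI[OF _ vnorm_op_apply_schur_matrix_le[OF xs ys _ mat_vec_norm_le_Frobenius]])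
    (simp_all add: sum_nonneg)

lemma vnorm_point_vec:
  assumes ys: "\<forall>j<n. ys j \<in> carrier G"
  shows "vnorm G n (point_vec n ys \<eta>) = sqrt (\<Sum>j<n. (cmod (\<eta> j))\<^sup>2)"
proof -
  let ?Y = "ys ` {..<n}"
  have "vec_supp G n (point_vec n ys \<eta>) \<subseteq> ?Y"
    by (auto simp: vec_supp_def point_vec_def split: if_splits)
  then have "vnorm G n (point_vec n ys \<eta>)
      = sqrt (\<Sum>x\<in>?Y. \<Sum>j<n. (cmod (point_vec n ys \<eta> x j))\<^sup>2)"
    using ys by (intro vnorm_eq_sum_superset) auto
  also have "(\<Sum>x\<in>?Y. \<Sum>j<n. (cmod (point_vec n ys \<eta> x j))\<^sup>2)
      = (\<Sum>j<n. \<Sum>x\<in>?Y. if x = ys j then (cmod (\<eta> j))\<^sup>2 else 0)"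
    by (subst sum.swap) (auto simp: point_vec_def intro!: sum.cong)
  also have "\<dots> = (\<Sum>j<n. (cmod (\<eta> j))\<^sup>2)"
    by (intro sum.cong) (simp_all add: sum.delta)
  finally show ?thesis .
qed

lemma vnorm_op_apply_schur_matrix_point_vec:
  assumes xs: "\<forall>i<n. xs i \<in> carrier G" and ys: "\<forall>j<n. ys j \<in> carrier G"
  shows "vnorm G n (op_apply G n (schur_matrix G n xs ys M) (point_vec n ys \<eta>))
       = sqrt (\<Sum>i<n. (cmod (\<Sum>j<n. M i j * \<eta> j))\<^sup>2)"
proof -
  let ?o = "op_apply G n (schur_matrix G n xs ys M) (point_vec n ys \<eta>)"
  let ?X = "xs ` {..<n}"
  have o: "?o x i = (if x = xs i then (\<Sum>j<n. M i j * \<eta> j) else 0)"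
    if x: "x \<in> carrier G" and i: "i < n" for x i
  proof -
    have "ys j \<otimes> (inv (xs i) \<otimes> x) = ys j \<longleftrightarrow> x = xs i" if "j < n" for j
      using that xs ys x i by (metis inv_closed l_cancel_one' m_closed r_inv inv_equality)
    then show ?thesis
      using x i by (auto simp: op_apply_schur_matrix[OF xs ys] point_vec_def intro: sum.cong)
  qed
  have X: "?X \<subseteq> carrier G"
    using xs by auto
  have "vec_supp G n ?o \<subseteq> ?X"
    by (auto simp: vec_supp_def o split: if_splits)
  then have "vnorm G n ?o = sqrt (\<Sum>x\<in>?X. \<Sum>i<n. (cmod (?o x i))\<^sup>2)"
    using X by (intro vnorm_eq_sum_superset) auto
  also have "(\<Sum>x\<in>?X. \<Sum>i<n. (cmod (?o x i))\<^sup>2)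
      = (\<Sum>i<n. \<Sum>x\<in>?X. if x = xs i then (cmod (\<Sum>j<n. M i j * \<eta> j))\<^sup>2 else 0)"
    using X by (subst sum.swap) (auto simp: o subset_iff intro!: sum.cong)
  also have "\<dots> = (\<Sum>i<n. (cmod (\<Sum>j<n. M i j * \<eta> j))\<^sup>2)"
    by (intro sum.cong) (simp_all add: sum.delta)
  finally show ?thesis .
qed

end

section \<open>Schur multipliers dominated by cb multipliers\<close>

lemma cb_mult_boundD:
  "cb_mult_bound G \<phi> C \<Longrightarrow> fin_mat G n a
    \<Longrightarrow> op_norm G n (\<lambda>g i j. \<phi> g * a g i j) \<le> C * op_norm G n a"
  by (simp add: cb_mult_bound_def)

context group
begin

lemma cb_mult_bound_nonneg:
  assumes cb: "cb_mult_bound G \<phi> C"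
  shows "0 \<le> C"
proof -
  let ?e = "\<lambda>_::nat. \<one>"
  let ?a = "schur_matrix G 1 ?e ?e (\<lambda>_ _. 1)"
  have e: "\<forall>i<1. ?e i \<in> carrier G"
    by simp
  have "vnorm G 1 (op_apply G 1 ?a (point_vec 1 ?e (\<lambda>_. 1))) \<le> op_norm G 1 ?a"
    using vnorm_point_vec[OF e]
    by (intro vnorm_op_apply_le_op_norm_unit[OF bounded_op_schur_matrix[OF e e] fin_vec_point_vec])
      simp
  then have a: "1 \<le> op_norm G 1 ?a"
    using vnorm_op_apply_schur_matrix_point_vec[OF e e] by simp
  have "0 \<le> op_norm G 1 (\<lambda>g i j. \<phi> g * ?a g i j)"
    unfolding mult_schur_matrix by (rule op_norm_nonneg[OF bounded_op_schur_matrix[OF e e]])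
  also have "\<dots> \<le> C * op_norm G 1 ?a"
    by (rule cb_mult_boundD[OF cb fin_mat_schur_matrix])
  finally show ?thesis
    using a by (simp add: zero_le_mult_iff)
qed

lemma cb_norm_lessE:
  assumes "\<phi> \<in> McbA G" and "cb_norm G \<phi> < c"
  obtains C where "cb_mult_bound G \<phi> C" and "C < c"
proof -
  have "{C. 0 \<le> C \<and> cb_mult_bound G \<phi> C} \<noteq> {}"
    using assms(1) cb_mult_bound_nonneg by (auto simp: McbA_def)
  then obtain C where "C \<in> {C. 0 \<le> C \<and> cb_mult_bound G \<phi> C}" "C < c"
    using cInf_lessD[OF _ assms(2)[unfolded cb_norm_def]] by blast
  with that show ?thesis
    by blast
qed

lemma cb_mult_bound_schur:
  fixes n :: nat
  assumes xs: "\<forall>i<n. xs i \<in> carrier G" and ys: "\<forall>j<n. ys j \<in> carrier G"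
    and cb: "cb_mult_bound G \<phi> C"
    and M: "\<And>\<eta>. (\<Sum>i<n. (cmod (\<Sum>j<n. M i j * \<eta> j))\<^sup>2) \<le> (\<Sum>j<n. (cmod (\<eta> j))\<^sup>2)"
  shows "(\<Sum>i<n. (cmod (\<Sum>j<n. \<phi> (xs i \<otimes> inv (ys j)) * M i j * \<eta> j))\<^sup>2)
           \<le> C\<^sup>2 * (\<Sum>j<n. (cmod (\<eta> j))\<^sup>2)"
    (is "?L \<le> C\<^sup>2 * ?R")
proof -
  let ?a = "schur_matrix G n xs ys M"
  let ?a' = "schur_matrix G n xs ys (\<lambda>i j. \<phi> (xs i \<otimes> inv (ys j)) * M i j)"
  have C: "0 \<le> C"
    by (rule cb_mult_bound_nonneg[OF cb])
  have "op_norm G n ?a' = op_norm G n (\<lambda>g i j. \<phi> g * ?a g i j)"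
    by (simp only: mult_schur_matrix)
  also have "\<dots> \<le> C * op_norm G n ?a"
    by (rule cb_mult_boundD[OF cb fin_mat_schur_matrix])
  also have "\<dots> \<le> C"
    using op_norm_schur_matrix_le[OF xs ys zero_le_one, of M] M C
    by (simp add: mult_left_le)
  finally have a': "op_norm G n ?a' \<le> C" .
  have "sqrt ?L = vnorm G n (op_apply G n ?a' (point_vec n ys \<eta>))"
    using vnorm_op_apply_schur_matrix_point_vec[OF xs ys] by (simp add: mult.assoc)
  also have "\<dots> \<le> op_norm G n ?a' * vnorm G n (point_vec n ys \<eta>)"
    by (rule vnorm_op_apply_le_op_norm[OF bounded_op_schur_matrix[OF xs ys] fin_vec_point_vec])
  also have "\<dots> \<le> C * sqrt ?R"
    unfolding vnorm_point_vec[OF ys] using a' by (intro mult_right_mono) (simp_all add: sum_nonneg)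
  also have "\<dots> = sqrt (C\<^sup>2 * ?R)"
    using C by (simp add: real_sqrt_mult)
  finally show ?thesis
    by (simp only: real_sqrt_le_iff)
qed

end

section \<open>Witnesses for large Schur multiplier norm\<close>

definition orthonormal_columns :: "nat \<Rightarrow> (nat \<Rightarrow> nat \<Rightarrow> real) \<Rightarrow> bool" where
  "orthonormal_columns n M \<longleftrightarrow>
     (\<forall>j<n. \<forall>k<n. (\<Sum>i<n. M i j * M i k) = (if j = k then 1 else 0))"

(* Since M is orthogonal, a witness shows that the Schur multiplier P on M_n has norm at
   least (1 + sqrt 2)/2. *)
definition schur_witness ::
    "nat \<Rightarrow> (nat \<Rightarrow> nat \<Rightarrow> real) \<Rightarrow> (nat \<Rightarrow> nat \<Rightarrow> real) \<Rightarrow> (nat \<Rightarrow> real) \<Rightarrow> bool" where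
  "schur_witness n P M e \<longleftrightarrow> orthonormal_columns n M \<and> 0 < (\<Sum>j<n. (e j)\<^sup>2) \<and>
     ((1 + sqrt 2) / 2)\<^sup>2 * (\<Sum>j<n. (e j)\<^sup>2) \<le> (\<Sum>i<n. (\<Sum>j<n. P i j * M i j * e j)\<^sup>2)"

definition mat_of_rows :: "'a list list \<Rightarrow> nat \<Rightarrow> nat \<Rightarrow> 'a" where
  "mat_of_rows xss i j = xss ! i ! j"

definition toeplitz :: "(int \<Rightarrow> 'a) \<Rightarrow> nat \<Rightarrow> nat \<Rightarrow> 'a" where
  "toeplitz c i j = c (int i - int j)"

lemma orthonormal_columns_isometry:
  assumes M: "orthonormal_columns n M"
  shows "(\<Sum>i<n. (cmod (\<Sum>j<n. of_real (M i j) * \<eta> j))\<^sup>2) = (\<Sum>j<n. (cmod (\<eta> j))\<^sup>2)"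
proof -
  have "(of_real (\<Sum>i<n. (cmod (\<Sum>j<n. of_real (M i j) * \<eta> j))\<^sup>2) :: complex)
      = (\<Sum>i<n. (\<Sum>j<n. of_real (M i j) * \<eta> j) * cnj (\<Sum>k<n. of_real (M i k) * \<eta> k))"
    by (simp only: of_real_sum complex_norm_square)
  also have "\<dots> = (\<Sum>i<n. \<Sum>j<n. \<Sum>k<n. of_real (M i j * M i k) * (\<eta> j * cnj (\<eta> k)))"
    by (rule sum.cong[OF refl]) (simp add: cnj_sum sum_product mult_ac)
  also have "\<dots> = (\<Sum>j<n. \<Sum>k<n. \<Sum>i<n. of_real (M i j * M i k) * (\<eta> j * cnj (\<eta> k)))"
    by (subst sum.swap, rule sum.cong[OF refl], rule sum.swap)
  also have "\<dots> = (\<Sum>j<n. \<Sum>k<n. of_real (\<Sum>i<n. M i j * M i k) * (\<eta> j * cnj (\<eta> k)))"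
    by (simp add: sum_distrib_right of_real_sum)
  also have "\<dots> = (\<Sum>j<n. \<eta> j * cnj (\<eta> j))"
    using M by (intro sum.cong)
      (simp_all add: orthonormal_columns_def if_distrib[of "\<lambda>c. of_real c * _"] cong: if_cong)
  also have "\<dots> = of_real (\<Sum>j<n. (cmod (\<eta> j))\<^sup>2)"
    by (simp only: of_real_sum complex_norm_square)
  finally show ?thesis
    using of_real_eq_iff by blast
qed

lemma schur_witnessI:
  assumes "orthonormal_columns n M"
    and "(\<Sum>j<n. (e j)\<^sup>2) = R" and "(\<Sum>i<n. (\<Sum>j<n. P i j * M i j * e j)\<^sup>2) = L"
    and "0 < R" and "3 * R \<le> 4 * L" and "8 * R\<^sup>2 \<le> (4 * L - 3 * R)\<^sup>2"
  shows "schur_witness n P M e"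
proof -
  have "(2 * sqrt 2 * R)\<^sup>2 \<le> (4 * L - 3 * R)\<^sup>2"
    using assms(6) by (simp add: power_mult_distrib)
  then have "2 * sqrt 2 * R \<le> 4 * L - 3 * R"
    by (rule power2_le_imp_le) (use assms(5) in simp)
  then have "((1 + sqrt 2) / 2)\<^sup>2 * R \<le> L"
    by (simp add: power2_eq_square field_simps)
  with assms(1-4) show ?thesis
    by (simp add: schur_witness_def)
qed

lemma (in group) schur_witness_imp_cb_bound_ge:
  assumes cb: "cb_mult_bound G \<phi> C" and W: "schur_witness n P M e"
    and xs: "\<forall>i<n. xs i \<in> carrier G" and ys: "\<forall>j<n. ys j \<in> carrier G"
    and P: "\<And>i j. i < n \<Longrightarrow> j < n \<Longrightarrow> \<phi> (xs i \<otimes> inv (ys j)) = of_real (P i j)"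
  shows "(1 + sqrt 2) / 2 \<le> C"
proof -
  let ?R = "\<Sum>j<n. (e j)\<^sup>2"
  have "(\<Sum>i<n. (cmod (\<Sum>j<n. \<phi> (xs i \<otimes> inv (ys j)) * of_real (M i j) * of_real (e j)))\<^sup>2)
      \<le> C\<^sup>2 * (\<Sum>j<n. (cmod (of_real (e j) :: complex))\<^sup>2)"
    using W by (intro cb_mult_bound_schur[OF xs ys cb])
      (simp add: schur_witness_def orthonormal_columns_isometry)
  also have "(\<Sum>i<n. (cmod (\<Sum>j<n. \<phi> (xs i \<otimes> inv (ys j)) * of_real (M i j) * of_real (e j)))\<^sup>2)
      = (\<Sum>i<n. (\<Sum>j<n. P i j * M i j * e j)\<^sup>2)"
    using P by (intro sum.cong) (simp_all flip: of_real_mult of_real_sum)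
  finally have "(\<Sum>i<n. (\<Sum>j<n. P i j * M i j * e j)\<^sup>2) \<le> C\<^sup>2 * ?R"
    by simp
  moreover have "((1 + sqrt 2) / 2)\<^sup>2 * ?R \<le> (\<Sum>i<n. (\<Sum>j<n. P i j * M i j * e j)\<^sup>2)"
    and R: "0 < ?R"
    using W by (simp_all add: schur_witness_def)
  ultimately have "((1 + sqrt 2) / 2)\<^sup>2 * ?R \<le> C\<^sup>2 * ?R"
    by linarith
  then have "((1 + sqrt 2) / 2)\<^sup>2 \<le> C\<^sup>2"
    using R by simp
  then show ?thesis
    using cb_mult_bound_nonneg[OF cb] by (simp add: power2_le_iff_abs_le)
qed

(* The suffix of each name lists c(-1), c(-2) and, for the 4 x 4 witnesses, c(-3), c 3. *)
lemma toeplitz_witness_01: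
  fixes c :: "int \<Rightarrow> real"
  assumes "c 0 = 1" "c 1 = 1" "c 2 = 0" "c (-1) = 0" "c (-2) = 1"
  shows "\<exists>n M e. schur_witness n (toeplitz c) M e"
proof (intro exI)
  show "schur_witness 3 (toeplitz c)
        (mat_of_rows
          [[91/127, -42/127, 78/127],
           [78/127, 91/127, -42/127],
           [-42/127, 78/127, 91/127]])
        ((!) [3/5, 3/5, 3/5])"
    by (rule schur_witnessI[where R = "27/25" and L = "771147/403225"])
      (simp_all add: assms toeplitz_def mat_of_rows_def orthonormal_columns_def
        numeral_eq_Suc All_less_Suc power2_eq_square)
qed

lemma toeplitz_witness_10:
  fixes c :: "int \<Rightarrow> real"
  assumes "c 0 = 1" "c 1 = 1" "c 2 = 0" "c (-1) = 1" "c (-2) = 0"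
  shows "\<exists>n M e. schur_witness n (toeplitz c) M e"
proof (intro exI)
  show "schur_witness 3 (toeplitz c)
        (mat_of_rows
          [[25/57, 40/57, -32/57],
           [40/57, 7/57, 40/57],
           [-32/57, 40/57, 25/57]])
        ((!) [1/2, 3/5, 1/2])"
    by (rule schur_witnessI[where R = "43/50" and L = "4051/2850"])
      (simp_all add: assms toeplitz_def mat_of_rows_def orthonormal_columns_def
        numeral_eq_Suc All_less_Suc power2_eq_square)
qed

lemma toeplitz_witness_0000:
  fixes c :: "int \<Rightarrow> real"
  assumes "c 0 = 1" "c 1 = 1" "c 2 = 0"
    and "c (-1) = 0" "c (-2) = 0" "c (-3) = 0" "c 3 = 0"
  shows "\<exists>n M e. schur_witness n (toeplitz c) M e"
proof (intro exI)
  show "schur_witness 4 (toeplitz c)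
        (mat_of_rows
          [[10379/14021, -4660/14021, 4160/14021, -7060/14021],
           [8660/14021, 9379/14021, -4040/14021, 4160/14021],
           [-2960/14021, 8840/14021, 9379/14021, -4660/14021],
           [2260/14021, -2960/14021, 8660/14021, 10379/14021]])
        ((!) [2/5, 3/5, 3/5, 3/10])"
    by (rule schur_witnessI[where R = "97/100" and L = "28843595657/19658844100"])
      (simp_all add: assms toeplitz_def mat_of_rows_def orthonormal_columns_def
        numeral_eq_Suc All_less_Suc power2_eq_square)
qed

lemma toeplitz_witness_0001:
  fixes c :: "int \<Rightarrow> real"
  assumes "c 0 = 1" "c 1 = 1" "c 2 = 0"
    and "c (-1) = 0" "c (-2) = 0" "c (-3) = 0" "c 3 = 1"
  shows "\<exists>n M e. schur_witness n (toeplitz c) M e"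
proof (intro exI)
  show "schur_witness 4 (toeplitz c)
        (mat_of_rows
          [[0, 0, 0, -1],
           [78/127, 91/127, -42/127, 0],
           [-42/127, 78/127, 91/127, 0],
           [91/127, -42/127, 78/127, 0]])
        ((!) [3/5, 3/5, 3/5, 0])"
    by (rule schur_witnessI[where R = "27/25" and L = "771147/403225"])
      (simp_all add: assms toeplitz_def mat_of_rows_def orthonormal_columns_def
        numeral_eq_Suc All_less_Suc power2_eq_square)
qed

(* The only witness attaining the bound exactly: the constant (1 + sqrt 2)/2 comes from the
   pattern I + (cyclic shift) of this case. *)
lemma toeplitz_witness_0010:
  fixes c :: "int \<Rightarrow> real"
  assumes "c 0 = 1" "c 1 = 1" "c 2 = 0"
    and "c (-1) = 0" "c (-2) = 0" "c (-3) = 1" "c 3 = 0"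
  shows "\<exists>n M e. schur_witness n (toeplitz c) M e"
proof (intro exI)
  show "schur_witness 4 (toeplitz c)
        (mat_of_rows
          [[(2 + sqrt 2)/4, - sqrt 2/4, (2 - sqrt 2)/4, sqrt 2/4],
           [sqrt 2/4, (2 + sqrt 2)/4, - sqrt 2/4, (2 - sqrt 2)/4],
           [(2 - sqrt 2)/4, sqrt 2/4, (2 + sqrt 2)/4, - sqrt 2/4],
           [- sqrt 2/4, (2 - sqrt 2)/4, sqrt 2/4, (2 + sqrt 2)/4]])
        ((!) [1, 1, 1, 1])"
    by (rule schur_witnessI[where R = "4" and L = "3 + 2 * sqrt 2"])
      (simp_all add: assms toeplitz_def mat_of_rows_def orthonormal_columns_def
        numeral_eq_Suc All_less_Suc power2_eq_square field_simps)
qed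

lemma toeplitz_witness_0011:
  fixes c :: "int \<Rightarrow> real"
  assumes "c 0 = 1" "c 1 = 1" "c 2 = 0"
    and "c (-1) = 0" "c (-2) = 0" "c (-3) = 1" "c 3 = 1"
  shows "\<exists>n M e. schur_witness n (toeplitz c) M e"
proof (intro exI)
  show "schur_witness 4 (toeplitz c)
        (mat_of_rows
          [[7/134, 7/134, -13/134, 133/134],
           [91/134, 91/134, -35/134, -13/134],
           [-49/134, 85/134, 91/134, 7/134],
           [85/134, -49/134, 91/134, 7/134]])
        ((!) [3/5, 3/5, 3/5, 1/10])"
    by (rule schur_witnessI[where R = "109/100" and L = "1734097/897800"])
      (simp_all add: assms toeplitz_def mat_of_rows_def orthonormal_columns_def
        numeral_eq_Suc All_less_Suc power2_eq_square)
qed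

lemma toeplitz_witness_1100:
  fixes c :: "int \<Rightarrow> real"
  assumes "c 0 = 1" "c 1 = 1" "c 2 = 0"
    and "c (-1) = 1" "c (-2) = 1" "c (-3) = 0" "c 3 = 0"
  shows "\<exists>n M e. schur_witness n (toeplitz c) M e"
proof (intro exI)
  show "schur_witness 4 (toeplitz c)
        (mat_of_rows
          [[581/1619, 11860/30761, 22160/30761, -13880/30761],
           [1060/1619, 7039/30761, 80/30761, 22160/30761],
           [-1040/1619, 19120/30761, 7039/30761, 11860/30761],
           [-280/1619, -1040/1619, 1060/1619, 581/1619]])
        ((!) [2/5, 1/2, 3/5, 1/2])"
    by (rule schur_witnessI[where R = "51/50" and L = "88643775731/47311956050"])
      (simp_all add: assms toeplitz_def mat_of_rows_def orthonormal_columns_def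
        numeral_eq_Suc All_less_Suc power2_eq_square)
qed

lemma toeplitz_witness_1101:
  fixes c :: "int \<Rightarrow> real"
  assumes "c 0 = 1" "c 1 = 1" "c 2 = 0"
    and "c (-1) = 1" "c (-2) = 1" "c (-3) = 0" "c 3 = 1"
  shows "\<exists>n M e. schur_witness n (toeplitz c) M e"
proof (intro exI)
  show "schur_witness 4 (toeplitz c)
        (mat_of_rows
          [[2271/4829, 1770/4829, 2550/4829, -2920/4829],
           [2730/4829, 2721/4829, -1400/4829, 2550/4829],
           [-2650/4829, 2400/4829, 2721/4829, 1770/4829],
           [1920/4829, -2650/4829, 2730/4829, 2271/4829]])
        ((!) [1/2, 1/2, 1/2, 1/2])"
    by (rule schur_witnessI[where R = "1" and L = "45600151/23319241"])
      (simp_all add: assms toeplitz_def mat_of_rows_def orthonormal_columns_def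
        numeral_eq_Suc All_less_Suc power2_eq_square)
qed

lemma toeplitz_witness_1110:
  fixes c :: "int \<Rightarrow> real"
  assumes "c 0 = 1" "c 1 = 1" "c 2 = 0"
    and "c (-1) = 1" "c (-2) = 1" "c (-3) = 1" "c 3 = 0"
  shows "\<exists>n M e. schur_witness n (toeplitz c) M e"
proof (intro exI)
  show "schur_witness 4 (toeplitz c)
        (mat_of_rows
          [[4931/37869, 380/37869, -6820/12623, 31480/37869],
           [30020/37869, 15131/37869, 5480/12623, 5800/37869],
           [-22060/37869, 25640/37869, 4223/12623, 11380/37869],
           [-120/971, -600/971, 620/971, 429/971]])
        ((!) [1/2, 1/2, 3/5, 2/5])"
    by (rule schur_witnessI[where R = "51/50" and L = "8808385847/5515619850"])
      (simp_all add: assms toeplitz_def mat_of_rows_def orthonormal_columns_def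
        numeral_eq_Suc All_less_Suc power2_eq_square)
qed

lemma toeplitz_witness_1111:
  fixes c :: "int \<Rightarrow> real"
  assumes "c 0 = 1" "c 1 = 1" "c 2 = 0"
    and "c (-1) = 1" "c (-2) = 1" "c (-3) = 1" "c 3 = 1"
  shows "\<exists>n M e. schur_witness n (toeplitz c) M e"
proof (intro exI)
  show "schur_witness 4 (toeplitz c)
        (mat_of_rows
          [[1291/6941, 1000/6941, -4720/6941, 4820/6941],
           [5000/6941, 4459/6941, 1720/6941, -580/6941],
           [-320/631, 280/631, 319/631, 340/631],
           [3020/6941, -4220/6941, 3260/6941, 3259/6941]])
        ((!) [3/5, 1/2, 1/2, 1/2])"
    by (rule schur_witnessI[where R = "111/100" and L = "8778093791/4817748100"])
      (simp_all add: assms toeplitz_def mat_of_rows_def orthonormal_columns_def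
        numeral_eq_Suc All_less_Suc power2_eq_square)
qed

lemma toeplitz_witness_exists:
  fixes c :: "int \<Rightarrow> real"
  assumes "c 0 = 1" "c 1 = 1" "c 2 = 0" and binary: "\<And>k. c k = 0 \<or> c k = 1"
  shows "\<exists>n M e. schur_witness n (toeplitz c) M e"
  using binary[of "-1"] binary[of "-2"] binary[of "-3"] binary[of 3]
    toeplitz_witness_01[OF assms(1-3)]
    toeplitz_witness_10[OF assms(1-3)]
    toeplitz_witness_0000[OF assms(1-3)]
    toeplitz_witness_0001[OF assms(1-3)]
    toeplitz_witness_0010[OF assms(1-3)]
    toeplitz_witness_0011[OF assms(1-3)]
    toeplitz_witness_1100[OF assms(1-3)]
    toeplitz_witness_1101[OF assms(1-3)]
    toeplitz_witness_1110[OF assms(1-3)]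
    toeplitz_witness_1111[OF assms(1-3)]
  by blast

lemma schur_witness_products:
  "schur_witness 3 (mat_of_rows [[1, 1, 1], [1, 0, 1], [1, 1, 0]])
    (mat_of_rows
      [[7/43, 30/43, 30/43],
       [30/43, -25/43, 18/43],
       [30/43, 18/43, -25/43]])
    ((!) [7/10, 1/2, 1/2])"
  by (rule schur_witnessI[where R = "99/100" and L = "301801/184900"])
    (simp_all add: mat_of_rows_def orthonormal_columns_def numeral_eq_Suc All_less_Suc
      power2_eq_square)

section \<open>Squares and products in S\<close>

context group
begin

lemma square_mem:
  assumes S: "S \<subseteq> carrier G" "\<one> \<in> S" and w: "w \<in> S"
    and cb: "cb_mult_bound G (char_fun S) C" and C: "C < (1 + sqrt 2) / 2"
  shows "w \<otimes> w \<in> S"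
proof (rule ccontr)
  assume ww: "w \<otimes> w \<notin> S"
  define c :: "int \<Rightarrow> real" where "c k = (if w [^] k \<in> S then 1 else 0)" for k
  have wc: "w \<in> carrier G"
    using S w by auto
  have "w [^] (2::int) = w \<otimes> w"
    using int_pow_int[of G w 2] wc by (simp add: numeral_2_eq_2)
  then have "c 0 = 1" "c 1 = 1" "c 2 = 0" "\<And>k. c k = 0 \<or> c k = 1"
    using S w ww wc by (simp_all add: c_def)
  then obtain n M e where W: "schur_witness n (toeplitz c) M e"
    using toeplitz_witness_exists by blast
  have "(1 + sqrt 2) / 2 \<le> C"
  proof (rule schur_witness_imp_cb_bound_ge[OF cb W])
    show "char_fun S (w [^] i \<otimes> inv (w [^] j)) = of_real (toeplitz c i j)" for i j :: nat
      using wc by (simp add: char_fun_def c_def toeplitz_def int_pow_diff int_pow_int)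
  qed (use wc in auto)
  with C show False
    by simp
qed

lemma mul_or_mul_mem:
  assumes S: "S \<subseteq> carrier G" "\<one> \<in> S" and uv: "u \<in> S" "v \<in> S"
    and cb: "cb_mult_bound G (char_fun S) C" and C: "C < (1 + sqrt 2) / 2"
  shows "u \<otimes> v \<in> S \<or> v \<otimes> u \<in> S"
proof (rule ccontr)
  assume "\<not> (u \<otimes> v \<in> S \<or> v \<otimes> u \<in> S)"
  moreover have "u \<otimes> u \<in> S" "v \<otimes> v \<in> S"
    using square_mem[OF S _ cb C] uv by auto
  moreover have "u \<in> carrier G" "v \<in> carrier G"
    using S uv by auto
  ultimately have "(1 + sqrt 2) / 2 \<le> C"
    using S uv
    by (intro schur_witness_imp_cb_bound_ge[OF cb schur_witness_products,
          of "(!) [\<one>, u, v]" "(!) [\<one>, inv v, inv u]"])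
      (auto simp: numeral_eq_Suc less_Suc_eq char_fun_def mat_of_rows_def)
  with C show False
    by simp
qed

end

theorem mainTheorem4:
  fixes G :: "('a, 'b) monoid_scheme" and S :: "'a set" and u v :: 'a
  assumes "group G"
    and "S \<subseteq> carrier G"
    and "\<one>\<^bsub>G\<^esub> \<in> S"
    and "char_fun S \<in> McbA G"
    and "cb_norm G (char_fun S) < (1 + sqrt 2) / 2"
    and "u \<in> S" and "v \<in> S"
  shows "u \<otimes>\<^bsub>G\<^esub> v \<in> S \<or> v \<otimes>\<^bsub>G\<^esub> u \<in> S"
proof -
  interpret group G by fact
  obtain C where "cb_mult_bound G (char_fun S) C" "C < (1 + sqrt 2) / 2"
    using cb_norm_lessE[OF assms(4,5)] .
  then show ?thesis
    using mul_or_mul_mem assms(2,3,6,7) by blast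
qed

end
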